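(* The sequence $(f_n)_{n\ge 1}$ is strictly decreasing, i.e. $f_{n+1}<f_n$ for every integer $n\ge 1$.
   Context: Let $e(x)=(1+x)^{1/x}$ for $x>-1$, $x\neq 0$, and $e(0)=\mathrm{e}$ (the base of the natural logarithm). For $x\in(-1,1)$ one has the Maclaurin expansion $e(x)=\mathrm{e}\bigl(1+\sum_{k=1}^\infty e_k x^k\bigr)$ with $e_0=1$ (so $e_1=-\tfrac12$, $e_2=\tfrac{11}{24}$, $e_3=-\tfrac7{16},\dots$). Equivalently, for $k\ge1$, $e_k=\mathrm{e}^{-1}\sum_{i=1}^\infty \frac{S_1(k+i,i)}{(k+i)!}$, where $S_1(p,q)$ are the (signed) Stirling numbers of the first kind, defined by $S_1(p,p)=1$, $S_1(p,q)=0$ for $p<q$, and $S_1(p+1,q)=-pS_1(p,q)+S_1(p,q-1)$; the sign of $S_1(p,q)$ is $(-1)^{p-q}$. Define $f_k=(-1)^k e_k$ for $k\ge 0$. *)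

theory Defs
  imports "HOL-Analysis.Analysis"
begin

text \<open>The function e(x) = (1+x)^(1/x) for x > -1, x \<noteq> 0, with e(0) = e.
  (Outside (-1,\<infinity>) the value is irrelevant; we set it via the same formula.)\<close>
definition efun :: "real \<Rightarrow> real" where
  "efun x = (if x = 0 then exp 1 else (1 + x) powr (1 / x))"

text \<open>Maclaurin coefficients: e(x) = e (\<Sum> e_k x^k), so e_k = e^(k)(0) / (k! e).\<close>
definition ecoef :: "nat \<Rightarrow> real" where
  "ecoef k = (deriv ^^ k) efun 0 / (fact k * exp 1)"

definition fcoef :: "nat \<Rightarrow> real" where
  "fcoef k = (-1) ^ k * ecoef k"

end

theory Submission
  imports Defs
begin

text \<open>
  Write \<open>e(x) = e \<cdot> E(x)\<close> with \<open>E = exp \<circ> Q\<close> and \<open>Q(x) = ln(1+x)/x - 1\<close>. The series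
  \<open>D(x) = (1+x) E(x)\<close> has coefficients \<open>(-1)^k (f\<^sub>k - f\<^sub>k\<^sub>-\<^sub>1)\<close>, and since its logarithmic
  derivative is \<open>1/(1+x) + Q'(x) = \<Sum>\<^sub>j (-1)^j x^j/(j+2)\<close>, the numbers \<open>d\<^sub>k = (-1)^k D\<^sub>k\<close> obey
  \<open>d\<^sub>0 = 1\<close> and \<open>(n+1) d\<^sub>n\<^sub>+\<^sub>1 = - \<Sum>\<^sub>k\<^sub>\<le>\<^sub>n d\<^sub>k/(n-k+2)\<close>. An induction comparing the sum for \<open>n\<close>
  termwise with the one for \<open>n-1\<close> shows that all these sums are positive, i.e. \<open>d\<^sub>k < 0\<close> for
  \<open>k \<ge> 1\<close>, which is the claim.
\<close>

lemma has_fps_expansion_imp_eq_fps_nth_0: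
  fixes f :: "'a :: {banach, real_normed_div_algebra} \<Rightarrow> 'a"
  assumes "f has_fps_expansion F"
  shows "f 0 = fps_nth F 0"
proof -
  have "eventually (\<lambda>z. eval_fps F z = f z) (nhds 0)"
    using assms by (simp add: has_fps_expansion_def)
  then have "eval_fps F 0 = f 0" by (rule eventually_nhds_x_imp_x)
  then show ?thesis by (simp add: eval_fps_at_0)
qed

lemma fps_nth_fps_expansion_field:
  fixes f :: "'a :: {banach, real_normed_field} \<Rightarrow> 'a"
  assumes "f has_fps_expansion F"
  shows "fps_nth F n = (deriv ^^ n) f 0 / fact n"
proof -
  have "(deriv ^^ n) f has_fps_expansion (fps_deriv ^^ n) F"
    by (induction n) (simp_all add: assms has_fps_expansion_deriv)
  then have "(deriv ^^ n) f 0 = fact n * fps_nth F n"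
    by (simp add: has_fps_expansion_imp_eq_fps_nth_0 fps_0th_higher_deriv)
  then show ?thesis by simp
qed

lemma fps_conv_radius_ge_1_if_bounded:
  fixes F :: "'a :: {banach, real_normed_div_algebra} fps"
  assumes "\<And>n. norm (fps_nth F n) \<le> C"
  shows "fps_conv_radius F \<ge> 1"
  unfolding fps_conv_radius_def
proof (rule conv_radius_geI_ex')
  fix r :: real assume r: "0 < r" "ereal r < 1"
  show "summable (\<lambda>n. fps_nth F n * of_real r ^ n)"
  proof (rule summable_comparison_test)
    show "\<exists>N. \<forall>n\<ge>N. norm (fps_nth F n * of_real r ^ n) \<le> C * r ^ n"
      using assms r by (auto simp: norm_mult norm_power intro!: mult_right_mono)
    show "summable (\<lambda>n. C * r ^ n)"
      using r by (intro summable_mult summable_geometric) auto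
  qed
qed

lemma fps_nth_bounded_if_deriv_eq_mult:
  fixes F G :: "'a :: real_normed_field fps"
  assumes deriv: "fps_deriv F = F * G"
    and F0: "norm (fps_nth F 0) \<le> 1" and G: "\<And>n. norm (fps_nth G n) \<le> 1"
  shows "norm (fps_nth F n) \<le> 1"
proof (induction n rule: less_induct)
  case (less n)
  show ?case
  proof (cases n)
    case 0
    with F0 show ?thesis by simp
  next
    case (Suc m)
    have "real (Suc m) * norm (fps_nth F (Suc m)) = norm (fps_nth (fps_deriv F) m)"
      by (simp add: norm_mult del: of_nat_Suc)
    also have "\<dots> = norm (\<Sum>i=0..m. fps_nth F i * fps_nth G (m - i))"
      by (simp add: deriv fps_mult_nth)
    also have "\<dots> \<le> (\<Sum>i=0..m. norm (fps_nth F i) * norm (fps_nth G (m - i)))"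
      by (rule norm_sum [THEN order_trans]) (simp add: norm_mult)
    also have "\<dots> \<le> (\<Sum>i=0..m. 1)"
      using less Suc G by (intro sum_mono mult_le_one) auto
    finally show ?thesis
      using Suc by simp
  qed
qed

lemma eval_fps_eq_exp_if_deriv_eq_mult:
  fixes F G :: "real fps"
  assumes deriv: "fps_deriv F = F * fps_deriv G" and F0: "fps_nth F 0 = exp (fps_nth G 0)"
    and R: "ereal R \<le> fps_conv_radius F" "ereal R \<le> fps_conv_radius G" and x: "\<bar>x\<bar> < R"
  shows "eval_fps F x = exp (eval_fps G x)"
proof -
  define h where "h y = eval_fps F y * exp (- eval_fps G y)" for y
  have "(h has_real_derivative 0) (at y)" if "y \<in> {-R<..<R}" for y
  proof -
    have "ereal (norm y) < ereal R"
      using that by auto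
    with R have radii: "ereal (norm y) < fps_conv_radius F" "ereal (norm y) < fps_conv_radius G"
      by (meson less_le_trans)+
    have dG: "(eval_fps G has_real_derivative eval_fps (fps_deriv G) y) (at y)"
      using radii by (intro has_field_derivative_eval_fps)
    have "eval_fps (fps_deriv F) y = eval_fps F y * eval_fps (fps_deriv G) y"
      unfolding deriv using radii fps_conv_radius_deriv[of G]
      by (intro eval_fps_mult) (auto intro: less_le_trans)
    with radii have "(eval_fps F has_real_derivative eval_fps F y * eval_fps (fps_deriv G) y) (at y)"
      by (metis has_field_derivative_eval_fps)
    then show ?thesis
      unfolding h_def by (auto intro!: derivative_eq_intros dG)
  qed
  then have "h x = h 0"
    using x by (intro DERIV_isconst3[of "-R" R]) auto
  then show ?thesis
    by (simp add: h_def eval_fps_at_0 F0 exp_minus field_simps)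
qed

lemma eval_fps_ln_1:
  fixes x :: real
  assumes "\<bar>x\<bar> < 1"
  shows "eval_fps (fps_ln 1) x = ln (1 + x)"
proof -
  have "(\<lambda>n. fps_nth (fps_ln 1) n * x ^ n) sums eval_fps (fps_ln 1) x"
    using assms by (intro sums_eval_fps) (simp add: fps_conv_radius_ln)
  then have "(\<lambda>n. fps_nth (fps_ln 1) (Suc n) * x ^ Suc n) sums eval_fps (fps_ln 1) x"
    by (subst sums_Suc_iff) simp
  then have "(\<lambda>n. (-1) ^ n * (1 / real (n + 1)) * x ^ Suc n) sums eval_fps (fps_ln 1) x"
    by (simp add: fps_ln_nth)
  moreover have "ln (1 + x) = (\<Sum>n. (-1) ^ n * (1 / real (n + 1)) * x ^ Suc n)"
    using ln_series[of "1 + x"] assms by simp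
  ultimately show ?thesis
    by (simp add: sums_iff)
qed

lemma recurrence_partial_sum_pos:
  fixes d :: "nat \<Rightarrow> real"
  assumes d0: "d 0 = 1"
    and rec: "\<And>n. real (Suc n) * d (Suc n) = - (\<Sum>k\<le>n. d k / (real (n - k) + 2))"
    and neg: "\<And>k. 1 \<le> k \<Longrightarrow> k \<le> n \<Longrightarrow> d k < 0"
  shows "(\<Sum>k\<le>n. d k / (real (n - k) + 2)) > 0"
proof (cases n)
  case 0
  with d0 show ?thesis by simp
next
  case (Suc m)
  define r where "r = (real n + 1) / (real n + 2)"
  have term_bound: "r * (d k / (real (m - k) + 2)) \<le> d k / (real (n - k) + 2)" if "k \<le> m" for k
  proof (cases "k = 0")
    case True
    then show ?thesis by (simp add: r_def Suc d0 field_simps)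
  next
    case False
    define a where "a = real (m - k)"
    have a: "real (n - k) = a + 1" "0 \<le> a" "a + 1 \<le> real n"
      using that Suc by (simp_all add: a_def of_nat_diff)
    then have "1 / (real (n - k) + 2) \<le> r / (a + 2)"
      by (simp add: r_def divide_simps) (simp add: algebra_simps)
    from mult_left_mono_neg[OF this, of "d k"] show ?thesis
      using neg[of k] that False Suc by (simp add: a_def mult.commute)
  qed
  \<comment> \<open>the sum for \<open>n\<close> dominates \<open>r\<close> times the one for \<open>n - 1\<close>, which equals \<open>- n d\<^sub>n\<close>\<close>
  have rec_m: "(\<Sum>k\<le>m. d k / (real (m - k) + 2)) = - real n * d n"
    using rec[of m] Suc by (simp add: algebra_simps)
  have "d n * (1 / 2 - r * real n) = r * (\<Sum>k\<le>m. d k / (real (m - k) + 2)) + d n / 2"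
    unfolding rec_m by (simp add: algebra_simps)
  also have "\<dots> \<le> (\<Sum>k\<le>m. d k / (real (n - k) + 2)) + d n / 2"
    unfolding sum_distrib_left using term_bound by (intro add_right_mono sum_mono) simp
  also have "\<dots> = (\<Sum>k\<le>n. d k / (real (n - k) + 2))"
    using Suc by simp
  finally have lower: "d n * (1 / 2 - r * real n) \<le> (\<Sum>k\<le>n. d k / (real (n - k) + 2))" .
  have "r * real n > 1 / 2"
  proof -
    have n: "real n \<ge> 1"
      using Suc by simp
    then have "1 * (real n + 1) \<le> real n * (real n + 1)"
      by (intro mult_right_mono) auto
    with n have "real n + 2 < 2 * (real n * (real n + 1))"
      by (simp add: algebra_simps)
    then show ?thesis
      by (simp add: r_def field_simps)
  qed
  with neg[of n] Suc have "d n * (1 / 2 - r * real n) > 0"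
    by (intro mult_neg_neg) auto
  with lower show ?thesis
    by linarith
qed

lemma recurrence_coeffs_neg:
  fixes d :: "nat \<Rightarrow> real"
  assumes d0: "d 0 = 1"
    and rec: "\<And>n. real (Suc n) * d (Suc n) = - (\<Sum>k\<le>n. d k / (real (n - k) + 2))"
    and "k \<ge> 1"
  shows "d k < 0"
  using \<open>k \<ge> 1\<close>
proof (induction k rule: less_induct)
  case (less k)
  then obtain n where k: "k = Suc n"
    using not0_implies_Suc by force
  have "(\<Sum>i\<le>n. d i / (real (n - i) + 2)) > 0"
    using k less.IH by (intro recurrence_partial_sum_pos d0 rec) auto
  then have "real (Suc n) * d (Suc n) < 0"
    using rec[of n] by linarith
  then show ?case
    by (simp add: k mult_less_0_iff)
qed

text \<open>\<open>log_efun_fps\<close> is \<open>ln (e(x)/e) = ln(1+x)/x - 1\<close>; the shift divides by \<open>x\<close>.\<close>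

definition log_efun_fps :: "real fps" where
  "log_efun_fps = fps_shift 1 (fps_ln 1) - 1"

definition efun_fps :: "real fps" where
  "efun_fps = fps_exp 1 oo log_efun_fps"

lemma fps_nth_log_efun_fps:
  "fps_nth log_efun_fps k = (if k = 0 then 0 else (-1) ^ k / (real k + 1))"
  by (simp add: log_efun_fps_def fps_ln_nth)

lemma fps_nth_efun_fps_0 [simp]: "fps_nth efun_fps 0 = 1"
  by (simp add: efun_fps_def fps_nth_log_efun_fps)

lemma fps_deriv_efun_fps: "fps_deriv efun_fps = efun_fps * fps_deriv log_efun_fps"
  unfolding efun_fps_def by (subst fps_compose_deriv) (simp_all add: fps_nth_log_efun_fps)

lemma fps_conv_radius_log_efun_fps: "fps_conv_radius log_efun_fps \<ge> 1"
  by (rule fps_conv_radius_ge_1_if_bounded[of _ 1]) (simp add: fps_nth_log_efun_fps abs_div)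

lemma fps_conv_radius_efun_fps: "fps_conv_radius efun_fps \<ge> 1"
proof (rule fps_conv_radius_ge_1_if_bounded)
  fix n
  show "norm (fps_nth efun_fps n) \<le> 1"
    by (rule fps_nth_bounded_if_deriv_eq_mult[OF fps_deriv_efun_fps])
       (simp_all add: fps_nth_log_efun_fps abs_div abs_mult)
qed

lemma eval_log_efun_fps:
  fixes x :: real
  assumes "\<bar>x\<bar> < 1" "x \<noteq> 0"
  shows "eval_fps log_efun_fps x = ln (1 + x) / x - 1"
proof -
  have radius: "ereal (norm x) < fps_conv_radius (fps_ln (1::real))"
    using assms by (simp add: fps_conv_radius_ln)
  have "subdegree (fps_ln (1::real)) \<ge> 1"
    by (rule subdegree_geI) (auto simp: fps_eq_iff fps_ln_nth intro!: exI[of _ 1])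
  then have "eval_fps (fps_shift 1 (fps_ln 1)) x = eval_fps (fps_ln 1) x / x"
    using radius assms by (subst eval_fps_shift) auto
  then show ?thesis
    unfolding log_efun_fps_def using radius assms
    by (subst eval_fps_diff) (auto simp: eval_fps_ln_1)
qed

lemma efun_eq_eval_efun_fps:
  fixes x :: real
  assumes "\<bar>x\<bar> < 1"
  shows "efun x = exp 1 * eval_fps efun_fps x"
proof -
  have "eval_fps efun_fps x = exp (eval_fps log_efun_fps x)"
    using fps_conv_radius_efun_fps fps_conv_radius_log_efun_fps assms
    by (intro eval_fps_eq_exp_if_deriv_eq_mult[where R = 1] fps_deriv_efun_fps)
       (simp_all add: fps_nth_log_efun_fps one_ereal_def)
  moreover have "1 + x > 0"
    using assms by simp
  ultimately show ?thesis
    using assms by (cases "x = 0")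
      (simp_all add: efun_def eval_fps_at_0 fps_nth_log_efun_fps eval_log_efun_fps powr_def
         exp_add [symmetric])
qed

lemma efun_has_fps_expansion: "efun has_fps_expansion fps_const (exp 1) * efun_fps"
  unfolding has_fps_expansion_def
proof
  show "fps_conv_radius (fps_const (exp 1) * efun_fps) > 0"
    using less_le_trans[OF _ fps_conv_radius_efun_fps, of 0]
    by (simp add: fps_conv_radius_cmult_left)
  have "eventually (\<lambda>z. z \<in> ball (0::real) 1) (nhds 0)"
    by (intro eventually_nhds_in_open) auto
  then show "\<forall>\<^sub>F z in nhds 0. eval_fps (fps_const (exp 1) * efun_fps) z = efun z"
  proof eventually_elim
    case (elim z)
    then have "ereal (norm z) < 1"
      by simp
    then have "ereal (norm z) < fps_conv_radius efun_fps"
      using fps_conv_radius_efun_fps by (rule less_le_trans)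
    with elim show ?case
      by (simp add: eval_fps_mult efun_eq_eval_efun_fps)
  qed
qed

lemma ecoef_eq_fps_nth_efun_fps: "ecoef k = fps_nth efun_fps k"
  using fps_nth_fps_expansion_field[OF efun_has_fps_expansion, of k]
  by (simp add: ecoef_def field_simps)

lemma fps_deriv_one_plus_X_efun_fps:
  "fps_deriv ((1 + fps_X) * efun_fps) = (1 + fps_X) * efun_fps * Abs_fps (\<lambda>j. (-1) ^ j / (real j + 2))"
proof -
  have "Abs_fps (\<lambda>j. (-1) ^ j / (real j + 2)) = fps_deriv log_efun_fps + inverse (1 + fps_X)"
  proof (rule fps_ext)
    fix j
    show "fps_nth (Abs_fps (\<lambda>j. (-1) ^ j / (real j + 2))) j
        = fps_nth (fps_deriv log_efun_fps + inverse (1 + fps_X)) j"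
      by (simp add: fps_nth_log_efun_fps fps_inverse_fps_X_plus1) (simp add: field_simps)
  qed
  moreover have "fps_deriv ((1 + fps_X) * efun_fps)
      = efun_fps * ((1 + fps_X) * inverse (1 + fps_X)) + (1 + fps_X) * fps_deriv efun_fps"
    by (simp add: inverse_mult_eq_1')
  ultimately show ?thesis
    by (simp only: fps_deriv_efun_fps algebra_simps)
qed

definition fdiff :: "nat \<Rightarrow> real" where
  "fdiff k = (-1) ^ k * fps_nth ((1 + fps_X) * efun_fps) k"

lemma fdiff_0: "fdiff 0 = 1"
  by (simp add: fdiff_def)

lemma fdiff_Suc: "fdiff (Suc n) = fcoef (Suc n) - fcoef n"
  by (simp add: fdiff_def fcoef_def ecoef_eq_fps_nth_efun_fps algebra_simps)

lemma fdiff_recurrence: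
  "real (Suc n) * fdiff (Suc n) = - (\<Sum>k\<le>n. fdiff k / (real (n - k) + 2))"
proof -
  define D where "D = (1 + fps_X) * efun_fps"
  have deriv_D: "fps_deriv D = D * Abs_fps (\<lambda>j. (-1) ^ j / (real j + 2))"
    unfolding D_def by (rule fps_deriv_one_plus_X_efun_fps)
  have "real (Suc n) * fps_nth D (Suc n) = fps_nth (fps_deriv D) n"
    by (simp add: algebra_simps)
  also have "\<dots> = (\<Sum>k\<le>n. fps_nth D k * ((-1) ^ (n - k) / (real (n - k) + 2)))"
    by (simp add: deriv_D fps_mult_nth atLeast0AtMost)
  finally have coeff: "real (Suc n) * fps_nth D (Suc n)
      = (\<Sum>k\<le>n. fps_nth D k * ((-1) ^ (n - k) / (real (n - k) + 2)))" .
  have "real (Suc n) * fdiff (Suc n) = (-1) ^ Suc n * (real (Suc n) * fps_nth D (Suc n))"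
    by (simp add: fdiff_def D_def)
  also have "\<dots> = (\<Sum>k\<le>n. (-1) ^ Suc n * (fps_nth D k * ((-1) ^ (n - k) / (real (n - k) + 2))))"
    by (simp only: coeff sum_distrib_left)
  also have "\<dots> = (\<Sum>k\<le>n. - (fdiff k / (real (n - k) + 2)))"
  proof (rule sum.cong)
    fix k assume "k \<in> {..n}"
    then have sign: "(-1) ^ n * (-1) ^ (n - k) = ((-1) ^ k :: real)"
      by (simp add: power_add [symmetric] minus_one_power_iff)
    have "(-1) ^ Suc n * (fps_nth D k * ((-1) ^ (n - k) / (real (n - k) + 2)))
        = ((-1) ^ Suc n * (-1) ^ (n - k)) * fps_nth D k / (real (n - k) + 2)"
      by (simp add: algebra_simps)
    also have "\<dots> = - (fdiff k / (real (n - k) + 2))"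
      by (simp add: sign fdiff_def D_def)
    finally show "(-1) ^ Suc n * (fps_nth D k * ((-1) ^ (n - k) / (real (n - k) + 2)))
        = - (fdiff k / (real (n - k) + 2))" .
  qed simp
  finally show ?thesis
    by (simp add: sum_negf)
qed

theorem mainTheorem1:
  fixes n :: nat
  assumes "n \<ge> 1"
  shows "fcoef (Suc n) < fcoef n"
proof -
  have "fdiff (Suc n) < 0"
    by (rule recurrence_coeffs_neg[OF fdiff_0 fdiff_recurrence]) simp
  then show ?thesis
    by (simp add: fdiff_Suc)
qed

end
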